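(* Let $(\mathcal L,\langle\,,\,\rangle)$ be a (right) Leibniz algebra over a field $\mathbf{k}$ (any dimension and characteristic) with basis $X=\{x_j\mid j\in J\}$, and let $k\in\mathbf{k}$ be nonzero. Let $((\hat A,\hat q),\hat i)$ be the free invariant algebra generated by $X$ (constructed as below), extend $\hat i$ linearly to an injective linear map $\mathcal L\to\hat A$, $x\mapsto\hat x$, and let $R$ be the two-sided ideal of $\hat A$ generated by all elements $$\widehat{\langle x,y\rangle}-\hat x\hat y+\hat y\hat x-\hat y\hat q\hat x+\hat x\hat y\hat q-k\hat x\hat q\hat y+k\hat q\hat y\hat x,\qquad x,y\in\mathcal L.$$ Let $\mathcal U:=\hat A/R$, $\bar q:=\hat q+R$, $i(x):=\hat x+R$. Then $((\mathcal U,\bar q),i)$ is the enveloping$^{\langle4\text{-th}\rangle}$ algebra of $(\mathcal L,\langle\,,\,\rangle)$.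
   Context: Right Leibniz algebra: bilinear $\langle\,,\,\rangle$ with $\langle\langle x,y\rangle,z\rangle=\langle x,\langle y,z\rangle\rangle+\langle\langle x,z\rangle,y\rangle$. Invariant algebra: for an associative algebra $A$ (with identity) and idempotent $q$, $(A,q):=\{a\in A\mid qaq=qa\}$; it is a Leibniz algebra $Leib((A,q),\langle\,,\,\rangle_{4,k})$ under $\langle a,b\rangle_{4,k}:=ab-ba+bqa-abq+kaqb-kqba$. Invariant homomorphism $(A,q_A)\to(B,q_B)$: linear, multiplicative, $1_A\mapsto1_B$, $q_A\mapsto q_B$. Free invariant algebra on $X$: $V$ with basis $X\cup\{\tilde q\}$ ($\tilde q\notin X$), $I\subseteq T(V)$ the ideal generated by $\tilde q\otimes\tilde q-\tilde q$ and $\tilde q\otimes a\otimes\tilde q-\tilde q\otimes a$ ($a\in T(V)$), $\hat A=T(V)/I$, $\hat q=\tilde q+I$, $\hat i(x_j)=x_j+I$ (these are linearly independent). An enveloping$^{\langle4\text{-th}\rangle}$ algebra of $\mathcal L$ is a pair $((\mathcal U,\bar q),i)$ with $(\mathcal U,\bar q)$ an invariant algebra and $i:\mathcal L\to(\mathcal U,\bar q)$ such that (i) $i$ is a Leibniz algebra homomorphism $\mathcal L\to Leib((\mathcal U,\bar q),\langle\,,\,\rangle_{4,k})$, i.e. $i(\langle x,y\rangle)=i(x)i(y)-i(y)i(x)+i(y)\bar qi(x)-i(x)i(y)\bar q+ki(x)\bar qi(y)-k\bar qi(y)i(x)$, and (ii) for every invariant algebra $(A,q)$ and every Leibniz homomorphism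 $f:\mathcal L\to Leib((A,q),\langle\,,\,\rangle_{4,k})$ there is a unique invariant homomorphism $f':(\mathcal U,\bar q)\to(A,q)$ with $f=f'\circ i$. *)

theory Defs
  imports Main "HOL.Vector_Spaces"
begin

record ('a, 'k) kalg =
  acar  :: "'a set"
  aadd  :: "'a \<Rightarrow> 'a \<Rightarrow> 'a"
  azero :: 'a
  amul  :: "'a \<Rightarrow> 'a \<Rightarrow> 'a"
  aone  :: 'a
  asmul :: "'k \<Rightarrow> 'a \<Rightarrow> 'a"

definition asub :: "('a, 'k::field) kalg \<Rightarrow> 'a \<Rightarrow> 'a \<Rightarrow> 'a" where
  "asub A a b = aadd A a (asmul A (-1) b)"

definition is_kalg :: "('a, 'k::field) kalg \<Rightarrow> bool" where
  "is_kalg A \<longleftrightarrow>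
     azero A \<in> acar A \<and> aone A \<in> acar A \<and>
     (\<forall>a\<in>acar A. \<forall>b\<in>acar A. aadd A a b \<in> acar A \<and> amul A a b \<in> acar A) \<and>
     (\<forall>c. \<forall>a\<in>acar A. asmul A c a \<in> acar A) \<and>
     (\<forall>a\<in>acar A. \<forall>b\<in>acar A. \<forall>c\<in>acar A. aadd A (aadd A a b) c = aadd A a (aadd A b c)) \<and>
     (\<forall>a\<in>acar A. \<forall>b\<in>acar A. aadd A a b = aadd A b a) \<and>
     (\<forall>a\<in>acar A. aadd A a (azero A) = a) \<and>
     (\<forall>a\<in>acar A. aadd A a (asmul A (-1) a) = azero A) \<and>
     (\<forall>a\<in>acar A. asmul A 1 a = a) \<and>
     (\<forall>c d. \<forall>a\<in>acar A. asmul A (c * d) a = asmul A c (asmul A d a)) \<and>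
     (\<forall>c d. \<forall>a\<in>acar A. asmul A (c + d) a = aadd A (asmul A c a) (asmul A d a)) \<and>
     (\<forall>c. \<forall>a\<in>acar A. \<forall>b\<in>acar A. asmul A c (aadd A a b) = aadd A (asmul A c a) (asmul A c b)) \<and>
     (\<forall>a\<in>acar A. \<forall>b\<in>acar A. \<forall>c\<in>acar A. amul A (amul A a b) c = amul A a (amul A b c)) \<and>
     (\<forall>a\<in>acar A. amul A (aone A) a = a \<and> amul A a (aone A) = a) \<and>
     (\<forall>a\<in>acar A. \<forall>b\<in>acar A. \<forall>c\<in>acar A.
        amul A a (aadd A b c) = aadd A (amul A a b) (amul A a c) \<and>
        amul A (aadd A a b) c = aadd A (amul A a c) (amul A b c)) \<and>
     (\<forall>c. \<forall>a\<in>acar A. \<forall>b\<in>acar A.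
        asmul A c (amul A a b) = amul A (asmul A c a) b \<and>
        asmul A c (amul A a b) = amul A a (asmul A c b))"

definition invariant_alg :: "('a, 'k::field) kalg \<Rightarrow> 'a \<Rightarrow> bool" where
  "invariant_alg A q \<longleftrightarrow> is_kalg A \<and> q \<in> acar A \<and> amul A q q = q"

definition inv_set :: "('a, 'k::field) kalg \<Rightarrow> 'a \<Rightarrow> 'a set" where
  "inv_set A q = {a \<in> acar A. amul A q (amul A a q) = amul A q a}"

definition br4 :: "('a, 'k::field) kalg \<Rightarrow> 'a \<Rightarrow> 'k \<Rightarrow> 'a \<Rightarrow> 'a \<Rightarrow> 'a" where
  "br4 A q k a b =
     asub A
      (aadd A
        (asub A
          (aadd A
            (asub A (amul A a b) (amul A b a))
            (amul A b (amul A q a)))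
          (amul A a (amul A b q)))
        (asmul A k (amul A a (amul A q b))))
      (asmul A k (amul A q (amul A b a)))"

definition inv_hom :: "('a, 'k::field) kalg \<Rightarrow> 'a \<Rightarrow> ('b, 'k) kalg \<Rightarrow> 'b \<Rightarrow> ('a \<Rightarrow> 'b) \<Rightarrow> bool" where
  "inv_hom A qA B qB \<phi> \<longleftrightarrow>
     (\<forall>a\<in>inv_set A qA. \<phi> a \<in> inv_set B qB) \<and>
     (\<forall>a\<in>inv_set A qA. \<forall>b\<in>inv_set A qA. \<phi> (aadd A a b) = aadd B (\<phi> a) (\<phi> b)) \<and>
     (\<forall>c. \<forall>a\<in>inv_set A qA. \<phi> (asmul A c a) = asmul B c (\<phi> a)) \<and>
     (\<forall>a\<in>inv_set A qA. \<forall>b\<in>inv_set A qA. \<phi> (amul A a b) = amul B (\<phi> a) (\<phi> b)) \<and>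
     \<phi> (aone A) = aone B \<and> \<phi> qA = qB"

definition leibniz_alg :: "('k::field \<Rightarrow> 'L::ab_group_add \<Rightarrow> 'L) \<Rightarrow> ('L \<Rightarrow> 'L \<Rightarrow> 'L) \<Rightarrow> bool" where
  "leibniz_alg scale br \<longleftrightarrow>
     vector_space scale \<and>
     (\<forall>x y z. br (x + y) z = br x z + br y z) \<and>
     (\<forall>x y z. br x (y + z) = br x y + br x z) \<and>
     (\<forall>c x y. br (scale c x) y = scale c (br x y)) \<and>
     (\<forall>c x y. br x (scale c y) = scale c (br x y)) \<and>
     (\<forall>x y z. br (br x y) z = br x (br y z) + br (br x z) y)"

definition leib_hom :: "('k::field \<Rightarrow> 'L::ab_group_add \<Rightarrow> 'L) \<Rightarrow> ('L \<Rightarrow> 'L \<Rightarrow> 'L) \<Rightarrow> 'k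
      \<Rightarrow> ('a, 'k) kalg \<Rightarrow> 'a \<Rightarrow> ('L \<Rightarrow> 'a) \<Rightarrow> bool" where
  "leib_hom scale br k A q f \<longleftrightarrow>
     (\<forall>x. f x \<in> inv_set A q) \<and>
     (\<forall>x y. f (x + y) = aadd A (f x) (f y)) \<and>
     (\<forall>c x. f (scale c x) = asmul A c (f x)) \<and>
     (\<forall>x y. f (br x y) = br4 A q k (f x) (f y))"

text \<open>Enveloping^<4-th> algebra; the universal property is stated for all
  invariant algebras whose elements live in the type 'b (the theorem is
  polymorphic in 'b, so this covers every invariant algebra).\<close>
definition enveloping4 ::
  "('k::field \<Rightarrow> 'L::ab_group_add \<Rightarrow> 'L) \<Rightarrow> ('L \<Rightarrow> 'L \<Rightarrow> 'L) \<Rightarrow> 'k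
   \<Rightarrow> ('u, 'k) kalg \<Rightarrow> 'u \<Rightarrow> ('L \<Rightarrow> 'u) \<Rightarrow> 'b itself \<Rightarrow> bool" where
  "enveloping4 scale br k U qU i (_ :: 'b itself) \<longleftrightarrow>
     invariant_alg U qU \<and>
     leib_hom scale br k U qU i \<and>
     (\<forall>(A :: ('b, 'k) kalg) q f. invariant_alg A q \<and> leib_hom scale br k A q f \<longrightarrow>
        (\<exists>f'. inv_hom U qU A q f' \<and> (\<forall>x. f x = f' (i x)) \<and>
              (\<forall>g. inv_hom U qU A q g \<and> (\<forall>x. f x = g (i x)) \<longrightarrow>
                   (\<forall>u\<in>inv_set U qU. g u = f' u))))"

definition is_ideal :: "('a, 'k::field) kalg \<Rightarrow> 'a set \<Rightarrow> bool" where
  "is_ideal A I \<longleftrightarrow> I \<subseteq> acar A \<and> azero A \<in> I \<and>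
     (\<forall>a\<in>I. \<forall>b\<in>I. aadd A a b \<in> I) \<and> (\<forall>c. \<forall>a\<in>I. asmul A c a \<in> I) \<and>
     (\<forall>a\<in>I. \<forall>r\<in>acar A. amul A r a \<in> I \<and> amul A a r \<in> I)"

definition gen_ideal :: "('a, 'k::field) kalg \<Rightarrow> 'a set \<Rightarrow> 'a set" where
  "gen_ideal A S = \<Inter>{I. is_ideal A I \<and> S \<subseteq> I}"

definition coset :: "('a, 'k::field) kalg \<Rightarrow> 'a set \<Rightarrow> 'a \<Rightarrow> 'a set" where
  "coset A I a = {aadd A a i | i. i \<in> I}"

definition rep :: "'a set \<Rightarrow> 'a" where
  "rep C = (SOME a. a \<in> C)"

definition quot_alg :: "('a, 'k::field) kalg \<Rightarrow> 'a set \<Rightarrow> ('a set, 'k) kalg" where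
  "quot_alg A I =
     \<lparr> acar = {coset A I a | a. a \<in> acar A},
       aadd = (\<lambda>C D. coset A I (aadd A (rep C) (rep D))),
       azero = coset A I (azero A),
       amul = (\<lambda>C D. coset A I (amul A (rep C) (rep D))),
       aone = coset A I (aone A),
       asmul = (\<lambda>c C. coset A I (asmul A c (rep C))) \<rparr>"

text \<open>Letters: None is q~, Some x (x \<in> X) is the basis vector x. T(V) is realised as
  the free associative algebra on these letters: finitely supported 'k-valued
  functions on words.\<close>
definition tens_alg :: "'L set \<Rightarrow> ('L option list \<Rightarrow> 'k::field, 'k) kalg" where
  "tens_alg X =
     \<lparr> acar = {p. finite {w. p w \<noteq> 0} \<and> (\<forall>w. p w \<noteq> 0 \<longrightarrow> set w \<subseteq> insert None (Some ` X))},
       aadd = (\<lambda>p r w. p w + r w),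
       azero = (\<lambda>w. 0),
       amul = (\<lambda>p r w. \<Sum>n\<in>{0..length w}. p (take n w) * r (drop n w)),
       aone = (\<lambda>w. if w = [] then 1 else 0),
       asmul = (\<lambda>c p w. c * p w) \<rparr>"

definition letter :: "'L option \<Rightarrow> 'L option list \<Rightarrow> 'k::field" where
  "letter a = (\<lambda>w. if w = [a] then 1 else 0)"

definition qtil :: "'L option list \<Rightarrow> 'k::field" where
  "qtil = letter None"

definition I_free :: "'L set \<Rightarrow> ('L option list \<Rightarrow> 'k::field) set" where
  "I_free X = gen_ideal (tens_alg X)
     ({asub (tens_alg X) (amul (tens_alg X) qtil qtil) qtil} \<union>
      {asub (tens_alg X) (amul (tens_alg X) qtil (amul (tens_alg X) a qtil)) (amul (tens_alg X) qtil a)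
        | a. a \<in> acar (tens_alg X)})"

definition A_hat :: "'L set \<Rightarrow> (('L option list \<Rightarrow> 'k::field) set, 'k) kalg" where
  "A_hat X = quot_alg (tens_alg X) (I_free X)"

definition q_hat :: "'L set \<Rightarrow> ('L option list \<Rightarrow> 'k::field) set" where
  "q_hat X = coset (tens_alg X) (I_free X) qtil"

definition i_hat :: "'L set \<Rightarrow> 'L \<Rightarrow> ('L option list \<Rightarrow> 'k::field) set" where
  "i_hat X x = coset (tens_alg X) (I_free X) (letter (Some x))"

text \<open>The linear extension x \<mapsto> x^ of i^ to L: if x = \<Sum> c_b b (b \<in> X) then
  x^ = (\<Sum> c_b b) + I, where \<Sum> c_b b is taken in V \<subseteq> T(V).\<close>
definition hat :: "('k::field \<Rightarrow> 'L::ab_group_add \<Rightarrow> 'L) \<Rightarrow> 'L set \<Rightarrow> 'L \<Rightarrow> ('L option list \<Rightarrow> 'k) set" where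
  "hat scale X x = coset (tens_alg X) (I_free X)
     (\<lambda>w. case w of [Some b] \<Rightarrow> module.representation scale X x b | _ \<Rightarrow> 0)"

definition R_ideal :: "('k::field \<Rightarrow> 'L::ab_group_add \<Rightarrow> 'L) \<Rightarrow> ('L \<Rightarrow> 'L \<Rightarrow> 'L) \<Rightarrow> 'k \<Rightarrow> 'L set
     \<Rightarrow> ('L option list \<Rightarrow> 'k) set set" where
  "R_ideal scale br k X = gen_ideal (A_hat X)
     {asub (A_hat X) (hat scale X (br x y)) (br4 (A_hat X) (q_hat X) k (hat scale X x) (hat scale X y))
       | x y. True}"

definition U_env :: "('k::field \<Rightarrow> 'L::ab_group_add \<Rightarrow> 'L) \<Rightarrow> ('L \<Rightarrow> 'L \<Rightarrow> 'L) \<Rightarrow> 'k \<Rightarrow> 'L set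
     \<Rightarrow> (('L option list \<Rightarrow> 'k) set set, 'k) kalg" where
  "U_env scale br k X = quot_alg (A_hat X) (R_ideal scale br k X)"

definition q_bar :: "('k::field \<Rightarrow> 'L::ab_group_add \<Rightarrow> 'L) \<Rightarrow> ('L \<Rightarrow> 'L \<Rightarrow> 'L) \<Rightarrow> 'k \<Rightarrow> 'L set
     \<Rightarrow> ('L option list \<Rightarrow> 'k) set set" where
  "q_bar scale br k X = coset (A_hat X) (R_ideal scale br k X) (q_hat X)"

definition i_env :: "('k::field \<Rightarrow> 'L::ab_group_add \<Rightarrow> 'L) \<Rightarrow> ('L \<Rightarrow> 'L \<Rightarrow> 'L) \<Rightarrow> 'k \<Rightarrow> 'L set
     \<Rightarrow> 'L \<Rightarrow> ('L option list \<Rightarrow> 'k) set set" where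
  "i_env scale br k X x = coset (A_hat X) (R_ideal scale br k X) (hat scale X x)"

end

(*
  A Leibniz homomorphism f from L into an invariant algebra (A, q) determines the algebra map
  T(V) \<rightarrow> A sending q~ to q and each basis vector x_j to f(x_j). Since f takes values in
  {a | qaq = qa}, which is a subalgebra containing the idempotent q, this map kills the relators
  q~q~ - q~ and q~aq~ - q~a and so descends to A^; since f preserves brackets it also kills R
  and descends to U = A^/R. It is unique because U is generated as an algebra by q-bar and the i(x_j).
*)

theory Submission
  imports Defs "HOL-Algebra.Ring"
begin

section \<open>Algebras over a field given by a carrier set\<close>

definition ring_of :: "('a, 'k::field) kalg \<Rightarrow> 'a ring" where
  "ring_of A = \<lparr>carrier = acar A, monoid.mult = amul A, one = aone A, zero = azero A, add = aadd A\<rparr>"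

lemma ring_of_simps [simp]:
  "carrier (ring_of A) = acar A" "monoid.mult (ring_of A) = amul A"
  "one (ring_of A) = aone A" "zero (ring_of A) = azero A" "add (ring_of A) = aadd A"
  by (simp_all add: ring_of_def)

locale kalg =
  fixes A :: "('a, 'k::field) kalg"
  assumes is_kalg: "is_kalg A"
begin

lemma zero_closed [simp]: "azero A \<in> acar A"
  and one_closed [simp]: "aone A \<in> acar A"
  and add_closed [simp]: "a \<in> acar A \<Longrightarrow> b \<in> acar A \<Longrightarrow> aadd A a b \<in> acar A"
  and mul_closed [simp]: "a \<in> acar A \<Longrightarrow> b \<in> acar A \<Longrightarrow> amul A a b \<in> acar A"
  and smul_closed [simp]: "a \<in> acar A \<Longrightarrow> asmul A c a \<in> acar A"
  using is_kalg by (simp_all add: is_kalg_def)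

lemma add_assoc: "a \<in> acar A \<Longrightarrow> b \<in> acar A \<Longrightarrow> c \<in> acar A \<Longrightarrow>
    aadd A (aadd A a b) c = aadd A a (aadd A b c)"
  and add_commute: "a \<in> acar A \<Longrightarrow> b \<in> acar A \<Longrightarrow> aadd A a b = aadd A b a"
  and add_zero [simp]: "a \<in> acar A \<Longrightarrow> aadd A a (azero A) = a"
  and add_neg: "a \<in> acar A \<Longrightarrow> aadd A a (asmul A (-1) a) = azero A"
  and smul_one [simp]: "a \<in> acar A \<Longrightarrow> asmul A 1 a = a"
  and smul_smul: "a \<in> acar A \<Longrightarrow> asmul A (s * t) a = asmul A s (asmul A t a)"
  and scalar_add_smul: "a \<in> acar A \<Longrightarrow> asmul A (s + t) a = aadd A (asmul A s a) (asmul A t a)"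
  and smul_add: "a \<in> acar A \<Longrightarrow> b \<in> acar A \<Longrightarrow>
    asmul A s (aadd A a b) = aadd A (asmul A s a) (asmul A s b)"
  and mul_assoc: "a \<in> acar A \<Longrightarrow> b \<in> acar A \<Longrightarrow> c \<in> acar A \<Longrightarrow>
    amul A (amul A a b) c = amul A a (amul A b c)"
  and one_mul [simp]: "a \<in> acar A \<Longrightarrow> amul A (aone A) a = a"
  and mul_one [simp]: "a \<in> acar A \<Longrightarrow> amul A a (aone A) = a"
  and mul_add: "a \<in> acar A \<Longrightarrow> b \<in> acar A \<Longrightarrow> c \<in> acar A \<Longrightarrow>
    amul A a (aadd A b c) = aadd A (amul A a b) (amul A a c)"
  and add_mul: "a \<in> acar A \<Longrightarrow> b \<in> acar A \<Longrightarrow> c \<in> acar A \<Longrightarrow>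
    amul A (aadd A a b) c = aadd A (amul A a c) (amul A b c)"
  and smul_mul_left: "a \<in> acar A \<Longrightarrow> b \<in> acar A \<Longrightarrow> amul A (asmul A s a) b = asmul A s (amul A a b)"
  and smul_mul_right: "a \<in> acar A \<Longrightarrow> b \<in> acar A \<Longrightarrow> amul A a (asmul A s b) = asmul A s (amul A a b)"
  using is_kalg unfolding is_kalg_def by metis+

lemma add_left_commute: "a \<in> acar A \<Longrightarrow> b \<in> acar A \<Longrightarrow> c \<in> acar A \<Longrightarrow>
    aadd A a (aadd A b c) = aadd A b (aadd A a c)"
  by (metis add_assoc add_commute)

lemma zero_smul [simp]: "a \<in> acar A \<Longrightarrow> asmul A 0 a = azero A"
proof -
  assume a: "a \<in> acar A"
  let ?z = "asmul A 0 a"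
  have "?z = aadd A (aadd A ?z ?z) (asmul A (-1) ?z)"
    using a by (simp add: add_assoc add_neg)
  also have "aadd A ?z ?z = ?z"
    using a by (simp add: scalar_add_smul[symmetric])
  finally show ?thesis using a by (simp add: add_neg)
qed

lemma smul_zero [simp]: "asmul A s (azero A) = azero A"
  by (metis zero_closed zero_smul smul_smul mult_zero_right)

lemma ring: "ring (ring_of A)"
proof (rule ringI)
  show "abelian_group (ring_of A)"
  proof (rule abelian_groupI)
    fix a assume "a \<in> carrier (ring_of A)"
    then show "\<exists>b\<in>carrier (ring_of A). b \<oplus>\<^bsub>ring_of A\<^esub> a = \<zero>\<^bsub>ring_of A\<^esub>"
      by (intro bexI[of _ "asmul A (-1) a"]) (simp_all add: add_commute[of "asmul A (-1) a"] add_neg)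
  qed (simp_all add: add_assoc add_commute add_left_commute)
  show "monoid (ring_of A)"
    by (rule monoidI) (simp_all add: mul_assoc)
qed (simp_all add: mul_add add_mul)

end

sublocale kalg \<subseteq> R: ring "ring_of A"
  rewrites "carrier (ring_of A) = acar A" and "add (ring_of A) = aadd A"
    and "monoid.mult (ring_of A) = amul A" and "zero (ring_of A) = azero A"
    and "one (ring_of A) = aone A"
  by (rule ring) simp_all

context kalg
begin

lemma a_inv_eq_smul: "a \<in> acar A \<Longrightarrow> a_inv (ring_of A) a = asmul A (-1) a"
  by (rule R.add.inv_equality) (simp_all add: add_commute[of "asmul A (-1) a"] add_neg)

lemma sub_eq_add_a_inv: "b \<in> acar A \<Longrightarrow> asub A a b = aadd A a (a_inv (ring_of A) b)"
  by (simp add: asub_def a_inv_eq_smul)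

lemma sub_closed [simp]: "a \<in> acar A \<Longrightarrow> b \<in> acar A \<Longrightarrow> asub A a b \<in> acar A"
  by (simp add: asub_def)

lemma sub_self [simp]: "a \<in> acar A \<Longrightarrow> asub A a a = azero A"
  by (simp add: asub_def add_neg)

lemma add_sub_cancel_left: "a \<in> acar A \<Longrightarrow> b \<in> acar A \<Longrightarrow> aadd A b (asub A a b) = a"
  by (simp add: sub_eq_add_a_inv R.a_lcomm[of b a] R.r_neg)

lemma sub_add_cancel_left: "b \<in> acar A \<Longrightarrow> i \<in> acar A \<Longrightarrow> asub A (aadd A b i) b = i"
  by (simp add: sub_eq_add_a_inv R.a_comm[of b i] R.a_assoc R.r_neg)

lemma a_inv_sub: "a \<in> acar A \<Longrightarrow> b \<in> acar A \<Longrightarrow> a_inv (ring_of A) (asub A a b) = asub A b a"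
  by (simp add: sub_eq_add_a_inv R.minus_add R.a_comm)

lemma sub_eq_zero_iff: "a \<in> acar A \<Longrightarrow> b \<in> acar A \<Longrightarrow> asub A a b = azero A \<longleftrightarrow> a = b"
  using add_sub_cancel_left[of a b] by auto

lemma smul_sub: "a \<in> acar A \<Longrightarrow> b \<in> acar A \<Longrightarrow>
    asmul A s (asub A a b) = asub A (asmul A s a) (asmul A s b)"
  by (simp add: asub_def smul_add smul_smul[symmetric] mult.commute)

lemma smul_finsum:
  "finite S \<Longrightarrow> f \<in> S \<rightarrow> acar A \<Longrightarrow>
    asmul A c (finsum (ring_of A) f S) = finsum (ring_of A) (\<lambda>x. asmul A c (f x)) S"
proof (induction S rule: finite_induct)
  case (insert x S)
  then show ?case
    by (simp add: R.finsum_insert smul_add R.finsum_closed Pi_iff)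
qed simp

end

section \<open>Homomorphisms, ideals and quotient algebras\<close>

definition alg_hom :: "('a, 'k::field) kalg \<Rightarrow> ('b, 'k) kalg \<Rightarrow> ('a \<Rightarrow> 'b) \<Rightarrow> bool" where
  "alg_hom A B \<phi> \<longleftrightarrow> (\<forall>a\<in>acar A. \<phi> a \<in> acar B) \<and>
    (\<forall>a\<in>acar A. \<forall>b\<in>acar A. \<phi> (aadd A a b) = aadd B (\<phi> a) (\<phi> b)) \<and>
    (\<forall>c. \<forall>a\<in>acar A. \<phi> (asmul A c a) = asmul B c (\<phi> a)) \<and>
    (\<forall>a\<in>acar A. \<forall>b\<in>acar A. \<phi> (amul A a b) = amul B (\<phi> a) (\<phi> b)) \<and>
    \<phi> (aone A) = aone B"

lemma
  assumes "alg_hom A B \<phi>"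
  shows alg_hom_closed: "a \<in> acar A \<Longrightarrow> \<phi> a \<in> acar B"
    and alg_hom_add: "a \<in> acar A \<Longrightarrow> b \<in> acar A \<Longrightarrow> \<phi> (aadd A a b) = aadd B (\<phi> a) (\<phi> b)"
    and alg_hom_smul: "a \<in> acar A \<Longrightarrow> \<phi> (asmul A c a) = asmul B c (\<phi> a)"
    and alg_hom_mul: "a \<in> acar A \<Longrightarrow> b \<in> acar A \<Longrightarrow> \<phi> (amul A a b) = amul B (\<phi> a) (\<phi> b)"
    and alg_hom_one: "\<phi> (aone A) = aone B"
  using assms unfolding alg_hom_def by blast+

lemma alg_hom_zero:
  assumes "kalg A" "kalg B" "alg_hom A B \<phi>"
  shows "\<phi> (azero A) = azero B"
proof -
  interpret A: kalg A by fact
  interpret B: kalg B by fact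
  show ?thesis
    using alg_hom_smul[OF assms(3), of "aone A" 0] alg_hom_one[OF assms(3)] by simp
qed

lemma alg_hom_sub:
  assumes "kalg A" "kalg B" "alg_hom A B \<phi>" "a \<in> acar A" "b \<in> acar A"
  shows "\<phi> (asub A a b) = asub B (\<phi> a) (\<phi> b)"
proof -
  interpret A: kalg A by fact
  show ?thesis
    unfolding asub_def using assms(4,5)
    by (simp add: alg_hom_add[OF assms(3)] alg_hom_smul[OF assms(3)])
qed

lemma alg_hom_br4:
  assumes "kalg A" "kalg B" "alg_hom A B \<phi>" "a \<in> acar A" "b \<in> acar A" "q \<in> acar A"
  shows "\<phi> (br4 A q k a b) = br4 B (\<phi> q) k (\<phi> a) (\<phi> b)"
proof -
  interpret A: kalg A by fact
  show ?thesis
    using assms(4-6) unfolding br4_def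
    by (simp add: alg_hom_add[OF assms(3)] alg_hom_smul[OF assms(3)] alg_hom_mul[OF assms(3)]
        alg_hom_sub[OF assms(1-3)])
qed

lemma alg_hom_comp: "alg_hom A B \<phi> \<Longrightarrow> alg_hom B C \<psi> \<Longrightarrow> alg_hom A C (\<psi> \<circ> \<phi>)"
  unfolding alg_hom_def by auto

lemma alg_hom_kernel_ideal:
  assumes "kalg A" "kalg B" "alg_hom A B \<phi>"
  shows "is_ideal A {a\<in>acar A. \<phi> a = azero B}"
proof -
  interpret A: kalg A by fact
  interpret B: kalg B by fact
  note hom = alg_hom_closed[OF assms(3)] alg_hom_add[OF assms(3)] alg_hom_smul[OF assms(3)]
    alg_hom_mul[OF assms(3)] alg_hom_zero[OF assms]
  show ?thesis
    unfolding is_ideal_def by (simp add: hom)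
qed

lemma gen_ideal_subset: "S \<subseteq> gen_ideal A S"
  unfolding gen_ideal_def by blast

lemma gen_ideal_minimal: "is_ideal A J \<Longrightarrow> S \<subseteq> J \<Longrightarrow> gen_ideal A S \<subseteq> J"
  unfolding gen_ideal_def by blast

lemma (in kalg) is_ideal_gen_ideal:
  assumes "S \<subseteq> acar A"
  shows "is_ideal A (gen_ideal A S)"
proof -
  have "is_ideal A (acar A)"
    unfolding is_ideal_def by auto
  then have "\<Inter>{I. is_ideal A I \<and> S \<subseteq> I} \<subseteq> acar A"
    using assms by blast
  then show ?thesis
    unfolding gen_ideal_def is_ideal_def[of A "\<Inter>_"]
    by (intro conjI) (simp_all add: is_ideal_def)
qed

lemma alg_hom_vanishes_on_gen_ideal:
  assumes "kalg A" "kalg B" "alg_hom A B \<phi>" "S \<subseteq> acar A" "\<And>s. s \<in> S \<Longrightarrow> \<phi> s = azero B"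
  shows "i \<in> gen_ideal A S \<Longrightarrow> \<phi> i = azero B"
  using gen_ideal_minimal[OF alg_hom_kernel_ideal[OF assms(1-3)], of S] assms(4,5) by blast

locale kideal = kalg +
  fixes I
  assumes is_ideal: "is_ideal A I"
begin

lemma ideal_subset: "I \<subseteq> acar A"
  and ideal_zero: "azero A \<in> I"
  and ideal_add: "a \<in> I \<Longrightarrow> b \<in> I \<Longrightarrow> aadd A a b \<in> I"
  and ideal_smul: "a \<in> I \<Longrightarrow> asmul A c a \<in> I"
  and ideal_mul_left: "a \<in> I \<Longrightarrow> r \<in> acar A \<Longrightarrow> amul A r a \<in> I"
  and ideal_mul_right: "a \<in> I \<Longrightarrow> r \<in> acar A \<Longrightarrow> amul A a r \<in> I"
  using is_ideal unfolding is_ideal_def by blast+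

lemma ideal_closed: "a \<in> I \<Longrightarrow> a \<in> acar A"
  using ideal_subset by blast

lemma ideal_a_inv: "a \<in> I \<Longrightarrow> a_inv (ring_of A) a \<in> I"
  using ideal_smul[of a "-1"] by (simp add: a_inv_eq_smul ideal_closed)

lemma coset_self: "a \<in> acar A \<Longrightarrow> a \<in> coset A I a"
  unfolding coset_def using ideal_zero by force

lemma coset_subset: "a \<in> acar A \<Longrightarrow> coset A I a \<subseteq> acar A"
  unfolding coset_def using ideal_closed by auto

lemma coset_subset_coset:
  assumes a: "a \<in> acar A" and b: "b \<in> acar A" and ab: "asub A a b \<in> I"
  shows "coset A I a \<subseteq> coset A I b"
proof
  fix x assume "x \<in> coset A I a"
  then obtain i where i: "i \<in> I" "x = aadd A a i"
    unfolding coset_def by auto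
  have "x = aadd A b (aadd A (asub A a b) i)"
    using i a b ideal_closed[OF i(1)] by (simp add: add_assoc[symmetric] add_sub_cancel_left)
  then show "x \<in> coset A I b"
    unfolding coset_def using ideal_add[OF ab i(1)] by blast
qed

lemma coset_eq_iff:
  assumes a: "a \<in> acar A" and b: "b \<in> acar A"
  shows "coset A I a = coset A I b \<longleftrightarrow> asub A a b \<in> I"
proof
  assume "coset A I a = coset A I b"
  then obtain i where i: "i \<in> I" "a = aadd A b i"
    using coset_self[OF a] unfolding coset_def by auto
  then show "asub A a b \<in> I"
    using b ideal_closed[OF i(1)] by (simp add: sub_add_cancel_left)
next
  assume ab: "asub A a b \<in> I"
  then have "asub A b a \<in> I"
    using ideal_a_inv[OF ab] a b by (simp add: a_inv_sub)
  then show "coset A I a = coset A I b"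
    using coset_subset_coset a b ab by blast
qed

lemma rep_closed: "a \<in> acar A \<Longrightarrow> rep (coset A I a) \<in> acar A"
  and coset_rep: "a \<in> acar A \<Longrightarrow> coset A I (rep (coset A I a)) = coset A I a"
proof -
  assume a: "a \<in> acar A"
  have r: "rep (coset A I a) \<in> coset A I a"
    unfolding rep_def using coset_self[OF a] by (rule someI)
  then obtain i where i: "i \<in> I" "rep (coset A I a) = aadd A a i"
    unfolding coset_def by auto
  show rc: "rep (coset A I a) \<in> acar A"
    using r coset_subset[OF a] by blast
  have "asub A (rep (coset A I a)) a = i"
    using i a ideal_closed[OF i(1)] by (simp add: sub_add_cancel_left)
  with i rc a show "coset A I (rep (coset A I a)) = coset A I a"
    using coset_eq_iff by simp
qed

lemma rep_sub_in_ideal: "a \<in> acar A \<Longrightarrow> asub A (rep (coset A I a)) a \<in> I"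
  using rep_closed coset_rep coset_eq_iff by metis

lemma sub_add_in_ideal:
  assumes "a \<in> acar A" "b \<in> acar A" "a' \<in> acar A" "b' \<in> acar A"
    and "asub A a a' \<in> I" "asub A b b' \<in> I"
  shows "asub A (aadd A a b) (aadd A a' b') \<in> I"
proof -
  have "asub A (aadd A a b) (aadd A a' b') = aadd A (asub A a a') (asub A b b')"
    using assms(1-4) by (simp add: sub_eq_add_a_inv R.minus_add R.a_ac)
  then show ?thesis
    using ideal_add assms(5,6) by simp
qed

lemma sub_mul_in_ideal:
  assumes "a \<in> acar A" "b \<in> acar A" "a' \<in> acar A" "b' \<in> acar A"
    and "asub A a a' \<in> I" "asub A b b' \<in> I"
  shows "asub A (amul A a b) (amul A a' b') \<in> I"
proof -
  have "asub A (amul A a b) (amul A a' b') =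
      aadd A (amul A (asub A a a') b) (amul A a' (asub A b b'))"
    using assms(1-4)
    by (simp add: sub_eq_add_a_inv R.minus_add R.a_ac R.l_distr R.r_distr R.l_minus R.r_minus
        R.r_neg1 R.r_neg2)
  then show ?thesis
    using ideal_add ideal_mul_left ideal_mul_right assms by simp
qed

lemma sub_smul_in_ideal:
  "a \<in> acar A \<Longrightarrow> a' \<in> acar A \<Longrightarrow> asub A a a' \<in> I \<Longrightarrow> asub A (asmul A c a) (asmul A c a') \<in> I"
  using ideal_smul smul_sub by metis

abbreviation (input) Q where "Q \<equiv> quot_alg A I"
abbreviation (input) \<pi> where "\<pi> \<equiv> coset A I"

lemma quot_carrier: "acar Q = \<pi> ` acar A"
  unfolding quot_alg_def by auto

lemma coset_closed [simp]: "a \<in> acar A \<Longrightarrow> \<pi> a \<in> acar Q"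
  using quot_carrier by blast

lemma quot_add [simp]: "a \<in> acar A \<Longrightarrow> b \<in> acar A \<Longrightarrow> aadd Q (\<pi> a) (\<pi> b) = \<pi> (aadd A a b)"
  unfolding quot_alg_def using coset_eq_iff sub_add_in_ideal rep_sub_in_ideal rep_closed by simp

lemma quot_mul [simp]: "a \<in> acar A \<Longrightarrow> b \<in> acar A \<Longrightarrow> amul Q (\<pi> a) (\<pi> b) = \<pi> (amul A a b)"
  unfolding quot_alg_def using coset_eq_iff sub_mul_in_ideal rep_sub_in_ideal rep_closed by simp

lemma quot_smul [simp]: "a \<in> acar A \<Longrightarrow> asmul Q c (\<pi> a) = \<pi> (asmul A c a)"
  unfolding quot_alg_def using coset_eq_iff sub_smul_in_ideal rep_sub_in_ideal rep_closed by simp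

lemma quot_zero [simp]: "azero Q = \<pi> (azero A)"
  and quot_one [simp]: "aone Q = \<pi> (aone A)"
  unfolding quot_alg_def by simp_all

lemma quot_is_kalg: "is_kalg Q"
  unfolding is_kalg_def quot_carrier Ball_image_comp comp_def
  by (simp add: add_left_commute add_assoc add_commute add_neg smul_smul scalar_add_smul smul_add
      mul_assoc mul_add add_mul smul_mul_left smul_mul_right)

lemma coset_alg_hom: "alg_hom A Q \<pi>"
  unfolding alg_hom_def by simp

lemma quot_lift:
  assumes B: "kalg B" and \<phi>: "alg_hom A B \<phi>" and vanish: "\<And>i. i \<in> I \<Longrightarrow> \<phi> i = azero B"
  shows "alg_hom Q B (\<lambda>C. \<phi> (rep C))"
    and "a \<in> acar A \<Longrightarrow> \<phi> (rep (\<pi> a)) = \<phi> a"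
proof -
  interpret B: kalg B by fact
  have rep: "\<phi> (rep (\<pi> a)) = \<phi> a" if a: "a \<in> acar A" for a
  proof -
    have "asub B (\<phi> (rep (\<pi> a))) (\<phi> a) = azero B"
      using alg_hom_sub[OF kalg_axioms B \<phi> rep_closed[OF a] a] vanish rep_sub_in_ideal[OF a]
      by simp
    then show ?thesis
      using B.sub_eq_zero_iff alg_hom_closed[OF \<phi>] rep_closed a by blast
  qed
  then show "a \<in> acar A \<Longrightarrow> \<phi> (rep (\<pi> a)) = \<phi> a" .
  show "alg_hom Q B (\<lambda>C. \<phi> (rep C))"
    unfolding alg_hom_def quot_carrier Ball_image_comp comp_def using rep
    by (simp add: alg_hom_closed[OF \<phi>] alg_hom_add[OF \<phi>] alg_hom_smul[OF \<phi>] alg_hom_mul[OF \<phi>]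
        alg_hom_one[OF \<phi>])
qed

end

lemma kideal_gen_ideal: "kalg A \<Longrightarrow> S \<subseteq> acar A \<Longrightarrow> kideal A (gen_ideal A S)"
  by (simp add: kideal_axioms.intro kideal_def kalg.is_ideal_gen_ideal)

lemma kalg_quot_alg: "kideal A I \<Longrightarrow> kalg (quot_alg A I)"
  using kideal.quot_is_kalg kalg.intro by blast

lemma quot_gen_ideal_lift:
  assumes A: "kalg A" and B: "kalg B" and \<phi>: "alg_hom A B \<phi>" and S: "S \<subseteq> acar A"
    and vanish: "\<And>s. s \<in> S \<Longrightarrow> \<phi> s = azero B"
  shows "alg_hom (quot_alg A (gen_ideal A S)) B (\<lambda>C. \<phi> (rep C))"
    and "a \<in> acar A \<Longrightarrow> \<phi> (rep (coset A (gen_ideal A S) a)) = \<phi> a"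
  using kideal.quot_lift[OF kideal_gen_ideal[OF A S] B \<phi>]
    alg_hom_vanishes_on_gen_ideal[OF A B \<phi> S vanish] by blast+

section \<open>The tensor algebra as finitely supported functions on words\<close>

definition supp :: "('w \<Rightarrow> 'k::zero) \<Rightarrow> 'w set" where "supp p = {w. p w \<noteq> 0}"

definition letters :: "'L set \<Rightarrow> 'L option set" where "letters X = insert None (Some ` X)"

definition tens_mul ::
    "('L option list \<Rightarrow> 'k::field) \<Rightarrow> ('L option list \<Rightarrow> 'k) \<Rightarrow> 'L option list \<Rightarrow> 'k" where
  "tens_mul p r = (\<lambda>w. \<Sum>n\<in>{0..length w}. p (take n w) * r (drop n w))"

definition word_delta :: "'L option list \<Rightarrow> 'L option list \<Rightarrow> 'k::field" where
  "word_delta u = (\<lambda>v. if v = u then 1 else 0)"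

lemma tens_alg_carrier:
  "acar (tens_alg X) = {p. finite (supp p) \<and> (\<forall>w\<in>supp p. set w \<subseteq> letters X)}"
  unfolding tens_alg_def supp_def letters_def by auto

lemma tens_alg_ops [simp]:
  "aadd (tens_alg X) = (\<lambda>p r w. p w + r w)"
  "azero (tens_alg X) = (\<lambda>w. 0)"
  "amul (tens_alg X) = tens_mul"
  "aone (tens_alg X) = word_delta []"
  "asmul (tens_alg X) = (\<lambda>c p w. c * p w)"
  unfolding tens_alg_def supp_def letters_def tens_mul_def word_delta_def by (auto simp: fun_eq_iff)

lemma supp_add: "supp (\<lambda>w. (p::_\<Rightarrow>'k::field) w + r w) \<subseteq> supp p \<union> supp r"
  unfolding supp_def by auto

lemma supp_smul: "supp (\<lambda>w. (c::'k::field) * p w) \<subseteq> supp p"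
  unfolding supp_def by auto

lemma supp_tens_mul: "supp (tens_mul p r) \<subseteq> (\<lambda>(u,v). u @ v) ` (supp p \<times> supp r)"
proof
  fix w assume "w \<in> supp (tens_mul p r)"
  then have "(\<Sum>n\<in>{0..length w}. p (take n w) * r (drop n w)) \<noteq> 0"
    unfolding supp_def tens_mul_def by simp
  then obtain n where "p (take n w) * r (drop n w) \<noteq> 0"
    using sum.not_neutral_contains_not_neutral by blast
  then have "take n w \<in> supp p" "drop n w \<in> supp r"
    unfolding supp_def by auto
  then show "w \<in> (\<lambda>(u,v). u @ v) ` (supp p \<times> supp r)"
    by (metis (mono_tags, lifting) append_take_drop_id case_prod_conv mem_Sigma_iff rev_image_eqI)
qed

lemma tens_mul_closed:
  assumes "p \<in> acar (tens_alg X)" "r \<in> acar (tens_alg X)"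
  shows "tens_mul p r \<in> acar (tens_alg X)"
proof -
  have f: "finite (supp (tens_mul p r))"
    using assms by (auto simp: tens_alg_carrier intro: finite_subset[OF supp_tens_mul])
  have "set w \<subseteq> letters X" if w: "w \<in> supp (tens_mul p r)" for w
  proof -
    obtain u v where "u \<in> supp p" "v \<in> supp r" "w = u @ v"
      using supp_tens_mul[of p r] w by fast
    then show ?thesis
      using assms by (auto simp: tens_alg_carrier)
  qed
  then show ?thesis
    using f by (simp add: tens_alg_carrier)
qed

lemma tens_mul_assoc:
  fixes p r s :: "'L option list \<Rightarrow> 'k::field"
  shows "tens_mul (tens_mul p r) s = tens_mul p (tens_mul r s)"
proof
  fix w :: "'L option list"
  define L where "L = length w"
  define g where "g i j = p (take i w) * r (take j (drop i w)) * s (drop (i + j) w)" for i j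
  have "tens_mul (tens_mul p r) s w = (\<Sum>k\<le>L. \<Sum>i\<le>k. g i (k - i))"
    unfolding tens_mul_def L_def g_def atLeast0AtMost
    by (intro sum.cong refl) (auto simp: sum_distrib_right take_drop min_def intro!: sum.cong)
  also have "\<dots> = (\<Sum>(i, j)\<in>{(i, j). i + j \<le> L}. g i j)"
    by (rule sum.triangle_reindex_eq[symmetric])
  also have "{(i, j). i + j \<le> L} = Sigma {..L} (\<lambda>i. {..L - i})"
    by auto
  also have "(\<Sum>(i, j)\<in>Sigma {..L} (\<lambda>i. {..L - i}). g i j) = (\<Sum>i\<le>L. \<Sum>j\<le>L - i. g i j)"
    by (rule sum.Sigma[symmetric]) auto
  also have "\<dots> = tens_mul p (tens_mul r s) w"
    unfolding tens_mul_def L_def g_def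
    by (simp add: atLeast0AtMost sum_distrib_left mult.assoc add.commute)
  finally show "tens_mul (tens_mul p r) s w = tens_mul p (tens_mul r s) w" .
qed

lemma tens_mul_one_left: "tens_mul (word_delta []) r = r"
proof
  fix w
  have "tens_mul (word_delta []) r w = (\<Sum>n\<in>{0..length w}. if n = 0 then r w else 0)"
    unfolding tens_mul_def word_delta_def by (rule sum.cong) auto
  then show "tens_mul (word_delta []) r w = r w" by simp
qed

lemma tens_mul_one_right: "tens_mul p (word_delta []) = p"
proof
  fix w
  have "tens_mul p (word_delta []) w = (\<Sum>n\<in>{0..length w}. if n = length w then p w else 0)"
    unfolding tens_mul_def word_delta_def by (rule sum.cong) auto
  then show "tens_mul p (word_delta []) w = p w" by simp
qed

lemma tens_mul_add_right: "tens_mul p (\<lambda>w. r w + s w) = (\<lambda>w. tens_mul p r w + tens_mul p s w)"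
  unfolding tens_mul_def by (simp add: distrib_left sum.distrib)

lemma tens_mul_add_left: "tens_mul (\<lambda>w. p w + r w) s = (\<lambda>w. tens_mul p s w + tens_mul r s w)"
  unfolding tens_mul_def by (simp add: distrib_right sum.distrib)

lemma tens_mul_smul_left: "tens_mul (\<lambda>w. c * p w) r = (\<lambda>w. c * tens_mul p r w)"
  unfolding tens_mul_def by (simp add: sum_distrib_left mult.assoc)

lemma tens_mul_smul_right: "tens_mul p (\<lambda>w. c * r w) = (\<lambda>w. c * tens_mul p r w)"
  unfolding tens_mul_def by (simp add: sum_distrib_left mult.left_commute)

lemma supp_word_delta: "supp (word_delta u) = {u}"
  unfolding word_delta_def supp_def by auto

lemma word_delta_closed: "set u \<subseteq> letters X \<Longrightarrow> word_delta u \<in> acar (tens_alg X)"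
  by (simp add: tens_alg_carrier supp_word_delta)

lemma tens_add_closed:
  "p \<in> acar (tens_alg X) \<Longrightarrow> r \<in> acar (tens_alg X) \<Longrightarrow> (\<lambda>w. p w + r w) \<in> acar (tens_alg X)"
  using supp_add[of p r] by (auto simp: tens_alg_carrier intro: finite_subset)

lemma tens_smul_closed: "p \<in> acar (tens_alg X) \<Longrightarrow> (\<lambda>w. c * p w) \<in> acar (tens_alg X)"
  using supp_smul[of c p] by (auto simp: tens_alg_carrier intro: finite_subset)

lemma tens_alg_is_kalg: "is_kalg (tens_alg X)"
proof -
  have zero: "(\<lambda>w. 0) \<in> acar (tens_alg X)"
    by (simp add: supp_def tens_alg_carrier)
  have one: "word_delta [] \<in> acar (tens_alg X)"
    by (rule word_delta_closed) simp
  show ?thesis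
    unfolding is_kalg_def tens_alg_ops
    by (intro conjI ballI allI)
      (simp_all add: tens_add_closed tens_smul_closed zero one tens_mul_closed algebra_simps
        tens_mul_assoc tens_mul_one_left tens_mul_one_right tens_mul_add_right tens_mul_add_left
        tens_mul_smul_left tens_mul_smul_right)
qed

lemma kalg_tens_alg: "kalg (tens_alg X)"
  by (rule kalg.intro, rule tens_alg_is_kalg)

lemma tens_mul_word_delta: "tens_mul (word_delta u) (word_delta v) = word_delta (u @ v)"
proof
  fix w
  have key: "take n w = u \<and> drop n w = v \<longleftrightarrow> n = length u \<and> w = u @ v"
    if "n \<le> length w" for n
    using that append_take_drop_id[of n w] by auto
  have "tens_mul (word_delta u) (word_delta v) w =
      (\<Sum>n\<in>{0..length w}. if n = length u then word_delta (u @ v) w else 0)"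
    unfolding tens_mul_def
  proof (intro sum.cong refl)
    fix n assume "n \<in> {0..length w}"
    then show "word_delta u (take n w) * word_delta v (drop n w) =
        (if n = length u then word_delta (u @ v) w else 0)"
      using key[of n] unfolding word_delta_def
      by (cases "take n w = u"; cases "drop n w = v") auto
  qed
  also have "\<dots> = word_delta (u @ v) w"
    by (simp add: word_delta_def)
  finally show "tens_mul (word_delta u) (word_delta v) w = word_delta (u @ v) w" .
qed

lemma letter_eq_word_delta: "letter a = word_delta [a]"
  unfolding letter_def word_delta_def by simp

lemma qtil_eq_word_delta: "qtil = word_delta [None]"
  unfolding qtil_def letter_eq_word_delta ..

lemma tens_alg_induct_monomial [consumes 1, case_names zero step]:
  assumes p: "p \<in> acar (tens_alg X)"
    and zero: "P (\<lambda>w. 0)"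
    and step: "\<And>p c w. p \<in> acar (tens_alg X) \<Longrightarrow> set w \<subseteq> letters X \<Longrightarrow> P p \<Longrightarrow>
      P (\<lambda>v. p v + c * word_delta w v)"
  shows "P p"
proof -
  have "P p" if "finite S" "p \<in> acar (tens_alg X)" "supp p = S" for S p
    using that
  proof (induction S arbitrary: p rule: finite_induct)
    case empty
    then have "p = (\<lambda>w. 0)"
      unfolding supp_def by auto
    then show ?case
      using zero by simp
  next
    case (insert w S)
    let ?p' = "p(w := 0)"
    have supp: "supp ?p' = S"
      using insert.prems(2) insert.hyps(2) unfolding supp_def by auto
    then have "?p' \<in> acar (tens_alg X)"
      using insert.prems insert.hyps(1) unfolding tens_alg_carrier by auto
    moreover have "set w \<subseteq> letters X"
      using insert unfolding tens_alg_carrier by auto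
    moreover have "p = (\<lambda>v. ?p' v + p w * word_delta w v)"
      by (simp add: word_delta_def fun_eq_iff)
    ultimately show ?case
      using insert.IH supp step by metis
  qed
  then show ?thesis
    using p unfolding tens_alg_carrier by blast
qed

lemma tens_alg_induct [consumes 1, case_names one letter add smul mul]:
  assumes p: "p \<in> acar (tens_alg X)"
    and one: "P (word_delta [])"
    and letter: "\<And>a. a \<in> letters X \<Longrightarrow> P (letter a)"
    and add: "\<And>p r. p \<in> acar (tens_alg X) \<Longrightarrow> r \<in> acar (tens_alg X) \<Longrightarrow> P p \<Longrightarrow> P r \<Longrightarrow>
      P (\<lambda>w. p w + r w)"
    and smul: "\<And>p c. p \<in> acar (tens_alg X) \<Longrightarrow> P p \<Longrightarrow> P (\<lambda>w. c * p w)"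
    and mul: "\<And>p r. p \<in> acar (tens_alg X) \<Longrightarrow> r \<in> acar (tens_alg X) \<Longrightarrow> P p \<Longrightarrow> P r \<Longrightarrow>
      P (tens_mul p r)"
  shows "P p"
proof -
  have word: "P (word_delta w)" if "set w \<subseteq> letters X" for w
    using that
  proof (induction w)
    case Nil
    show ?case by (rule one)
  next
    case (Cons a w)
    then have "P (tens_mul (word_delta [a]) (word_delta w))"
      using mul[OF word_delta_closed word_delta_closed] letter[of a]
      by (simp add: letter_eq_word_delta)
    then show ?case
      by (simp add: tens_mul_word_delta)
  qed
  have "P (\<lambda>w. 0 * word_delta [] w)"
    by (rule smul[OF word_delta_closed one]) simp
  then have P_zero: "P (\<lambda>w. 0)"
    by simp
  show ?thesis
    using p
  proof (induction p rule: tens_alg_induct_monomial)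
    case zero
    show ?case by (rule P_zero)
  next
    case (step p c w)
    have "P (\<lambda>v. c * word_delta w v)"
      by (rule smul[OF word_delta_closed[OF step(2)] word[OF step(2)]])
    moreover have "(\<lambda>v. c * word_delta w v) \<in> acar (tens_alg X)"
      using tens_smul_closed[OF word_delta_closed[OF step(2)]] .
    ultimately show ?case
      using add[OF step(1)] step by blast
  qed
qed

section \<open>Evaluating the tensor algebra in an algebra\<close>

definition word_eval :: "('b, 'k::field) kalg \<Rightarrow> ('L option \<Rightarrow> 'b) \<Rightarrow> 'L option list \<Rightarrow> 'b" where
  "word_eval B g w = foldr (\<lambda>a acc. amul B (g a) acc) w (aone B)"

definition tens_eval :: "('b, 'k::field) kalg \<Rightarrow> ('L option \<Rightarrow> 'b) \<Rightarrow> ('L option list \<Rightarrow> 'k) \<Rightarrow> 'b" where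
  "tens_eval B g p = finsum (ring_of B) (\<lambda>w. asmul B (p w) (word_eval B g w)) (supp p)"

locale letter_assignment = kalg B for B :: "('b, 'k::field) kalg" +
  fixes g :: "'L option \<Rightarrow> 'b"
  assumes g_closed: "g a \<in> acar B"
begin

lemma word_eval_closed [simp]: "word_eval B g w \<in> acar B"
  by (induction w) (simp_all add: word_eval_def g_closed)

lemma word_eval_Nil [simp]: "word_eval B g [] = aone B"
  by (simp add: word_eval_def)

lemma word_eval_Cons: "word_eval B g (a # w) = amul B (g a) (word_eval B g w)"
  by (simp add: word_eval_def)

lemma word_eval_append: "word_eval B g (u @ v) = amul B (word_eval B g u) (word_eval B g v)"
  by (induction u) (simp_all add: word_eval_Cons mul_assoc g_closed)

lemma tens_eval_eq_finsum:
  assumes "finite S" "supp p \<subseteq> S"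
  shows "tens_eval B g p = finsum (ring_of B) (\<lambda>w. asmul B (p w) (word_eval B g w)) S"
  unfolding tens_eval_def
  by (rule R.add.finprod_mono_neutral_cong_left[OF assms]) (auto simp: supp_def)

lemma tens_eval_closed [simp]: "tens_eval B g p \<in> acar B"
  unfolding tens_eval_def by (rule R.finsum_closed) auto

lemma tens_eval_zero: "tens_eval B g (\<lambda>w. 0) = azero B"
  unfolding tens_eval_def supp_def by simp

lemma tens_eval_add:
  assumes p: "p \<in> acar (tens_alg X)" and r: "r \<in> acar (tens_alg X)"
  shows "tens_eval B g (\<lambda>w. p w + r w) = aadd B (tens_eval B g p) (tens_eval B g r)"
proof -
  let ?S = "supp p \<union> supp r"
  let ?t = "\<lambda>p w. asmul B (p w) (word_eval B g w)"
  have S: "finite ?S"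
    using p r by (simp add: tens_alg_carrier)
  have "tens_eval B g (\<lambda>w. p w + r w) = finsum (ring_of B) (\<lambda>w. aadd B (?t p w) (?t r w)) ?S"
    using tens_eval_eq_finsum[OF S supp_add] by (simp add: scalar_add_smul)
  also have "\<dots> = aadd B (finsum (ring_of B) (?t p) ?S) (finsum (ring_of B) (?t r) ?S)"
    by (rule R.finsum_addf) auto
  also have "\<dots> = aadd B (tens_eval B g p) (tens_eval B g r)"
    using tens_eval_eq_finsum[OF S, of p] tens_eval_eq_finsum[OF S, of r] by simp
  finally show ?thesis .
qed

lemma tens_eval_smul:
  assumes p: "p \<in> acar (tens_alg X)"
  shows "tens_eval B g (\<lambda>w. c * p w) = asmul B c (tens_eval B g p)"
proof -
  have S: "finite (supp p)"
    using p by (simp add: tens_alg_carrier)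
  have "tens_eval B g (\<lambda>w. c * p w) =
      finsum (ring_of B) (\<lambda>w. asmul B c (asmul B (p w) (word_eval B g w))) (supp p)"
    using tens_eval_eq_finsum[OF S supp_smul] by (simp add: smul_smul)
  also have "\<dots> = asmul B c (tens_eval B g p)"
    unfolding tens_eval_def using smul_finsum[OF S] by simp
  finally show ?thesis .
qed

lemma tens_eval_word_delta: "tens_eval B g (word_delta w) = word_eval B g w"
  unfolding tens_eval_def supp_word_delta by (simp add: word_delta_def)

lemma tens_eval_mul_word_delta:
  assumes w: "set w \<subseteq> letters X" and r: "r \<in> acar (tens_alg X)"
  shows "tens_eval B g (tens_mul (word_delta w) r) = amul B (word_eval B g w) (tens_eval B g r)"
  using r
proof (induction r rule: tens_alg_induct_monomial)
  case zero
  then show ?case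
    by (simp add: tens_mul_def tens_eval_zero)
next
  case (step r c v)
  note closed = word_delta_closed tens_mul_closed tens_smul_closed
    and eval = tens_eval_add[where X = X] tens_eval_smul[where X = X] tens_eval_word_delta
  have "tens_eval B g (tens_mul (word_delta w) (\<lambda>x. r x + c * word_delta v x)) =
      tens_eval B g (\<lambda>x. tens_mul (word_delta w) r x + c * word_delta (w @ v) x)"
    by (simp add: tens_mul_add_right tens_mul_smul_right tens_mul_word_delta)
  also have "\<dots> = aadd B (amul B (word_eval B g w) (tens_eval B g r)) (asmul B c (word_eval B g (w @ v)))"
    using w step by (simp add: eval closed)
  also have "\<dots> = amul B (word_eval B g w) (tens_eval B g (\<lambda>x. r x + c * word_delta v x))"
    using step
    by (simp add: eval closed word_eval_append mul_add smul_mul_right)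
  finally show ?case .
qed

lemma tens_eval_mul:
  assumes p: "p \<in> acar (tens_alg X)" and r: "r \<in> acar (tens_alg X)"
  shows "tens_eval B g (tens_mul p r) = amul B (tens_eval B g p) (tens_eval B g r)"
  using p
proof (induction p rule: tens_alg_induct_monomial)
  case zero
  then show ?case
    by (simp add: tens_mul_def tens_eval_zero)
next
  case (step p c v)
  note closed = word_delta_closed tens_mul_closed tens_smul_closed
    and eval = tens_eval_add[where X = X] tens_eval_smul[where X = X] tens_eval_word_delta
  have "tens_eval B g (tens_mul (\<lambda>x. p x + c * word_delta v x) r) =
      tens_eval B g (\<lambda>x. tens_mul p r x + c * tens_mul (word_delta v) r x)"
    by (simp add: tens_mul_add_left tens_mul_smul_left)
  also have "\<dots> = aadd B (amul B (tens_eval B g p) (tens_eval B g r))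
      (asmul B c (amul B (word_eval B g v) (tens_eval B g r)))"
    using r step by (simp add: eval tens_eval_mul_word_delta closed)
  also have "\<dots> = amul B (tens_eval B g (\<lambda>x. p x + c * word_delta v x)) (tens_eval B g r)"
    using step
    by (simp add: eval closed add_mul smul_mul_left)
  finally show ?case .
qed

lemma tens_eval_alg_hom: "alg_hom (tens_alg X) B (tens_eval B g)"
  unfolding alg_hom_def
  using tens_eval_add tens_eval_smul tens_eval_mul tens_eval_word_delta[of "[]"] by simp

lemma tens_eval_letter: "tens_eval B g (letter a) = g a"
  unfolding letter_eq_word_delta tens_eval_word_delta by (simp add: word_eval_Cons g_closed)

end

lemma tens_alg_hom_ext:
  assumes h1: "alg_hom (tens_alg X) B \<phi>" and h2: "alg_hom (tens_alg X) B \<psi>"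
    and l: "\<And>a. a \<in> letters X \<Longrightarrow> \<phi> (letter a) = \<psi> (letter a)"
    and p: "p \<in> acar (tens_alg X)"
  shows "\<phi> p = \<psi> p"
  using p
proof (induction p rule: tens_alg_induct)
  case one show ?case using alg_hom_one[OF h1] alg_hom_one[OF h2] by simp
next
  case (letter a) show ?case using l[OF letter] .
next
  case (add p r) show ?case using alg_hom_add[OF h1 add(1,2)] alg_hom_add[OF h2 add(1,2)] add(3,4) by simp
next
  case (smul p c) show ?case using alg_hom_smul[OF h1 smul(1)] alg_hom_smul[OF h2 smul(1)] smul(2) by simp
next
  case (mul p r) show ?case using alg_hom_mul[OF h1 mul(1,2)] alg_hom_mul[OF h2 mul(1,2)] mul(3,4) by simp
qed

lemma tens_alg_hom_image:
  assumes h: "alg_hom (tens_alg X) B \<phi>"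
    and W: "aone B \<in> W" "\<And>a. a \<in> letters X \<Longrightarrow> \<phi> (letter a) \<in> W"
      "\<And>x y. x \<in> W \<Longrightarrow> y \<in> W \<Longrightarrow> aadd B x y \<in> W"
      "\<And>x c. x \<in> W \<Longrightarrow> asmul B c x \<in> W"
      "\<And>x y. x \<in> W \<Longrightarrow> y \<in> W \<Longrightarrow> amul B x y \<in> W"
    and p: "p \<in> acar (tens_alg X)"
  shows "\<phi> p \<in> W"
  using p
proof (induction p rule: tens_alg_induct)
  case one show ?case using alg_hom_one[OF h] W(1) by simp
next
  case (letter a) show ?case using W(2)[OF letter] .
next
  case (add p r) show ?case using alg_hom_add[OF h add(1,2)] W(3)[OF add(3,4)] by simp
next
  case (smul p c) show ?case using alg_hom_smul[OF h smul(1)] W(4)[OF smul(2)] by simp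
next
  case (mul p r) show ?case using alg_hom_mul[OF h mul(1,2)] W(5)[OF mul(3,4)] by simp
qed

declare tens_alg_ops [simp del]

section \<open>Invariant algebras\<close>

locale invariant_algebra =
  fixes A :: "('a, 'k::field) kalg" and q :: 'a
  assumes invariant_alg: "invariant_alg A q"
begin

sublocale kalg A
  using invariant_alg unfolding invariant_alg_def by (simp add: kalg.intro)

lemma q_closed [simp]: "q \<in> acar A"
  and q_idem: "amul A q q = q"
  using invariant_alg unfolding invariant_alg_def by auto

lemma inv_set_closed: "a \<in> inv_set A q \<Longrightarrow> a \<in> acar A"
  and inv_set_eq: "a \<in> inv_set A q \<Longrightarrow> amul A q (amul A a q) = amul A q a"
  unfolding inv_set_def by auto

lemma one_in_inv_set: "aone A \<in> inv_set A q"
  and q_in_inv_set: "q \<in> inv_set A q"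
  unfolding inv_set_def by (simp_all add: q_idem mul_assoc[symmetric])

lemma add_in_inv_set:
  assumes a: "a \<in> inv_set A q" and b: "b \<in> inv_set A q"
  shows "aadd A a b \<in> inv_set A q"
proof -
  have "amul A q (amul A (aadd A a b) q) = aadd A (amul A q (amul A a q)) (amul A q (amul A b q))"
    using inv_set_closed[OF a] inv_set_closed[OF b] by (simp add: add_mul mul_add)
  also have "\<dots> = amul A q (aadd A a b)"
    using inv_set_eq[OF a] inv_set_eq[OF b] inv_set_closed[OF a] inv_set_closed[OF b]
    by (simp add: mul_add)
  finally show ?thesis
    unfolding inv_set_def using inv_set_closed[OF a] inv_set_closed[OF b] by simp
qed

lemma smul_in_inv_set:
  assumes a: "a \<in> inv_set A q"
  shows "asmul A c a \<in> inv_set A q"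
proof -
  have "amul A q (amul A (asmul A c a) q) = asmul A c (amul A q (amul A a q))"
    using inv_set_closed[OF a] by (simp add: smul_mul_left smul_mul_right)
  also have "\<dots> = amul A q (asmul A c a)"
    using inv_set_eq[OF a] inv_set_closed[OF a] by (simp add: smul_mul_right)
  finally show ?thesis
    unfolding inv_set_def using inv_set_closed[OF a] by simp
qed

lemma mul_in_inv_set:
  assumes a: "a \<in> inv_set A q" and b: "b \<in> inv_set A q"
  shows "amul A a b \<in> inv_set A q"
proof -
  have ac: "a \<in> acar A" and bc: "b \<in> acar A"
    using a b by (simp_all add: inv_set_closed)
  have "amul A q (amul A (amul A a b) q) = amul A (amul A q a) (amul A b q)"
    using ac bc by (simp add: mul_assoc)
  also have "\<dots> = amul A (amul A q (amul A a q)) (amul A b q)"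
    using inv_set_eq[OF a] by simp
  also have "\<dots> = amul A (amul A q a) (amul A q (amul A b q))"
    using ac bc by (simp add: mul_assoc)
  also have "\<dots> = amul A (amul A q a) (amul A q b)"
    using inv_set_eq[OF b] by simp
  also have "\<dots> = amul A (amul A q (amul A a q)) b"
    using ac bc by (simp add: mul_assoc)
  also have "\<dots> = amul A q (amul A a b)"
    using ac bc inv_set_eq[OF a] by (simp add: mul_assoc)
  finally show ?thesis
    unfolding inv_set_def using ac bc by simp
qed

end

lemma inv_hom_iff_alg_hom:
  assumes "inv_set U qU = acar U"
  shows "inv_hom U qU A q \<phi> \<longleftrightarrow>
    alg_hom U A \<phi> \<and> \<phi> qU = q \<and> (\<forall>u\<in>acar U. \<phi> u \<in> inv_set A q)"
  unfolding inv_hom_def alg_hom_def assms by (auto simp: inv_set_def)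

section \<open>The enveloping algebra\<close>

definition vec_of ::
    "('k::field \<Rightarrow> 'L::ab_group_add \<Rightarrow> 'L) \<Rightarrow> 'L set \<Rightarrow> 'L \<Rightarrow> 'L option list \<Rightarrow> 'k" where
  "vec_of scale X x =
    (\<lambda>w. case w of [Some b] \<Rightarrow> module.representation scale X x b | _ \<Rightarrow> 0)"

lemma hat_eq_coset_vec_of: "hat scale X x = coset (tens_alg X) (I_free X) (vec_of scale X x)"
  unfolding hat_def vec_of_def ..

lemma vec_of_nonzero:
  "vec_of scale X x w \<noteq> 0 \<Longrightarrow> \<exists>b. w = [Some b] \<and> module.representation scale X x b \<noteq> 0"
  unfolding vec_of_def by (auto split: list.splits option.splits)

locale envelope_setting =
  fixes scale :: "'k::field \<Rightarrow> 'L::ab_group_add \<Rightarrow> 'L" and br :: "'L \<Rightarrow> 'L \<Rightarrow> 'L"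
    and X :: "'L set" and k :: 'k
  assumes vector_space: "vector_space scale"
    and independent: "module.independent scale X"
    and spanning: "module.span scale X = UNIV"
begin

lemma module: "module scale"
  using vector_space by (simp add: module_iff_vector_space)

lemma vec_of_closed: "vec_of scale X x \<in> acar (tens_alg X)"
proof -
  let ?B = "{b. module.representation scale X x b \<noteq> 0}"
  have supp: "supp (vec_of scale X x) \<subseteq> (\<lambda>b. [Some b]) ` ?B"
    unfolding supp_def using vec_of_nonzero by fastforce
  have "finite ?B"
    using module.finite_representation[OF module] by blast
  moreover have "set w \<subseteq> letters X" if "w \<in> supp (vec_of scale X x)" for w
    using supp that module.representation_ne_zero[OF module] unfolding letters_def by fastforce
  ultimately show ?thesis
    unfolding tens_alg_carrier using finite_subset[OF supp] by blast
qed

lemma vec_of_add: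
  "vec_of scale X (x + y) = aadd (tens_alg X) (vec_of scale X x) (vec_of scale X y)"
  unfolding vec_of_def tens_alg_ops
  using module.representation_add[OF module independent, of y x] spanning
  by (auto split: list.splits option.splits)

lemma vec_of_smul: "vec_of scale X (scale c x) = asmul (tens_alg X) c (vec_of scale X x)"
  unfolding vec_of_def tens_alg_ops
  using module.representation_scale[OF module independent, of x c] spanning
  by (auto split: list.splits option.splits)

lemma vec_of_basis: "b \<in> X \<Longrightarrow> vec_of scale X b = letter (Some b)"
  unfolding vec_of_def letter_def using module.representation_basis[OF module independent, of b]
  by (auto split: list.splits option.splits)

abbreviation T where "T \<equiv> tens_alg X :: ('L option list \<Rightarrow> 'k, 'k) kalg"
abbreviation I where "I \<equiv> I_free X :: ('L option list \<Rightarrow> 'k) set"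
abbreviation Ahat where "Ahat \<equiv> A_hat X :: (('L option list \<Rightarrow> 'k) set, 'k) kalg"
abbreviation qhat where "qhat \<equiv> q_hat X :: ('L option list \<Rightarrow> 'k) set"
abbreviation Rel where "Rel \<equiv> R_ideal scale br k X"
abbreviation U where "U \<equiv> U_env scale br k X"
abbreviation qbar where "qbar \<equiv> q_bar scale br k X"
abbreviation ibar where "ibar \<equiv> i_env scale br k X"
abbreviation proj_I where "proj_I \<equiv> coset T I"
abbreviation proj_R where "proj_R \<equiv> coset Ahat Rel"

definition invariance_relators :: "('L option list \<Rightarrow> 'k) set" where
  "invariance_relators = {asub T (amul T qtil qtil) qtil} \<union>
      {asub T (amul T qtil (amul T a qtil)) (amul T qtil a) | a. a \<in> acar T}"

definition leibniz_relators :: "('L option list \<Rightarrow> 'k) set set" where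
  "leibniz_relators =
    {asub Ahat (hat scale X (br x y)) (br4 Ahat qhat k (hat scale X x) (hat scale X y)) | x y. True}"

lemma I_eq: "I = gen_ideal T invariance_relators"
  unfolding I_free_def invariance_relators_def ..

lemma Rel_eq: "Rel = gen_ideal Ahat leibniz_relators"
  unfolding R_ideal_def leibniz_relators_def ..

lemma qtil_closed: "qtil \<in> acar T"
  unfolding qtil_eq_word_delta by (rule word_delta_closed) (simp add: letters_def)

sublocale T: kalg T
  by (rule kalg_tens_alg)

lemma invariance_relators_closed: "invariance_relators \<subseteq> acar T"
  unfolding invariance_relators_def using qtil_closed by auto

sublocale I: kideal T I
  unfolding I_eq by (rule kideal_gen_ideal[OF kalg_tens_alg invariance_relators_closed])

lemma Ahat_eq: "Ahat = quot_alg T I"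
  unfolding A_hat_def ..

sublocale Ahat: kalg Ahat
  unfolding Ahat_eq by (rule kalg_quot_alg[OF I.kideal_axioms])

lemma qhat_eq: "qhat = proj_I qtil"
  unfolding q_hat_def ..

lemma qhat_closed: "qhat \<in> acar Ahat"
  unfolding qhat_eq Ahat_eq using qtil_closed by simp

lemma hat_closed: "hat scale X x \<in> acar Ahat"
  unfolding hat_eq_coset_vec_of Ahat_eq using vec_of_closed by simp

lemma hat_add: "hat scale X (x + y) = aadd Ahat (hat scale X x) (hat scale X y)"
  unfolding hat_eq_coset_vec_of Ahat_eq using vec_of_closed by (simp add: vec_of_add)

lemma hat_smul: "hat scale X (scale c x) = asmul Ahat c (hat scale X x)"
  unfolding hat_eq_coset_vec_of Ahat_eq using vec_of_closed by (simp add: vec_of_smul)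

lemma Ahat_cases: "C \<in> acar Ahat \<Longrightarrow> \<exists>p\<in>acar T. C = proj_I p"
  unfolding Ahat_eq I.quot_carrier by blast

lemma invariance_relators_subset: "invariance_relators \<subseteq> I"
  unfolding I_eq by (rule gen_ideal_subset)

lemma qhat_idem: "amul Ahat qhat qhat = qhat"
proof -
  have "asub T (amul T qtil qtil) qtil \<in> I"
    using invariance_relators_subset unfolding invariance_relators_def by blast
  then have "proj_I (amul T qtil qtil) = proj_I qtil"
    using I.coset_eq_iff[OF T.mul_closed[OF qtil_closed qtil_closed] qtil_closed] by blast
  then show ?thesis
    unfolding qhat_eq Ahat_eq using qtil_closed by simp
qed

lemma qhat_invariant: "C \<in> acar Ahat \<Longrightarrow> amul Ahat qhat (amul Ahat C qhat) = amul Ahat qhat C"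
proof -
  assume "C \<in> acar Ahat"
  then obtain a where a: "a \<in> acar T" "C = proj_I a"
    using Ahat_cases by blast
  have "asub T (amul T qtil (amul T a qtil)) (amul T qtil a) \<in> I"
    using invariance_relators_subset a(1) unfolding invariance_relators_def by blast
  then have "proj_I (amul T qtil (amul T a qtil)) = proj_I (amul T qtil a)"
    by (intro iffD2[OF I.coset_eq_iff]) (simp_all add: qtil_closed a(1))
  then show ?thesis
    unfolding qhat_eq Ahat_eq a(2) using qtil_closed a(1) by simp
qed

lemma br4_closed: "a \<in> acar Ahat \<Longrightarrow> b \<in> acar Ahat \<Longrightarrow> br4 Ahat qhat k a b \<in> acar Ahat"
  unfolding br4_def using qhat_closed by simp

lemma leibniz_relators_closed: "leibniz_relators \<subseteq> acar Ahat"
  unfolding leibniz_relators_def using hat_closed br4_closed by auto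

sublocale Rel: kideal Ahat Rel
  unfolding Rel_eq by (rule kideal_gen_ideal[OF Ahat.kalg_axioms leibniz_relators_closed])

lemma leibniz_relators_subset: "leibniz_relators \<subseteq> Rel"
  unfolding Rel_eq by (rule gen_ideal_subset)

lemma U_eq: "U = quot_alg Ahat Rel"
  unfolding U_env_def ..

lemma kalg_U: "kalg U"
  unfolding U_eq by (rule kalg_quot_alg[OF Rel.kideal_axioms])

lemma qbar_eq: "qbar = proj_R qhat"
  unfolding q_bar_def ..

lemma ibar_eq: "ibar x = proj_R (hat scale X x)"
  unfolding i_env_def ..

lemma U_cases: "C \<in> acar U \<Longrightarrow> \<exists>p\<in>acar T. C = proj_R (proj_I p)"
  unfolding U_eq Rel.quot_carrier using Ahat_cases by blast

lemma inv_set_U: "inv_set U qbar = acar U"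
proof -
  have "amul U qbar (amul U C qbar) = amul U qbar C" if C: "C \<in> acar U" for C
  proof -
    obtain a where a: "a \<in> acar Ahat" "C = proj_R a"
      using C unfolding U_eq Rel.quot_carrier by blast
    show ?thesis
      unfolding qbar_eq U_eq a(2) using a(1) qhat_closed qhat_invariant[OF a(1)] by simp
  qed
  then show ?thesis
    unfolding inv_set_def by auto
qed

lemma U_invariant: "invariant_alg U qbar"
  unfolding invariant_alg_def using kalg.is_kalg[OF kalg_U] qhat_idem qhat_closed
  unfolding qbar_eq U_eq by simp

lemma ibar_leib_hom: "leib_hom scale br k U qbar ibar"
  unfolding leib_hom_def inv_set_U
proof (intro conjI allI)
  fix x
  show "ibar x \<in> acar U"
    unfolding ibar_eq U_eq using hat_closed by simp
next
  fix x y
  show "ibar (x + y) = aadd U (ibar x) (ibar y)"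
    unfolding ibar_eq U_eq hat_add using hat_closed by simp
next
  fix c x
  show "ibar (scale c x) = asmul U c (ibar x)"
    unfolding ibar_eq U_eq hat_smul using hat_closed by simp
next
  fix x y
  have "asub Ahat (hat scale X (br x y)) (br4 Ahat qhat k (hat scale X x) (hat scale X y)) \<in> Rel"
    using leibniz_relators_subset unfolding leibniz_relators_def by blast
  then have "ibar (br x y) = proj_R (br4 Ahat qhat k (hat scale X x) (hat scale X y))"
    unfolding ibar_eq by (intro iffD2[OF Rel.coset_eq_iff]) (simp_all add: hat_closed br4_closed)
  also have "\<dots> = br4 U qbar k (ibar x) (ibar y)"
    unfolding ibar_eq qbar_eq U_eq
    by (rule alg_hom_br4[OF Ahat.kalg_axioms kalg_quot_alg[OF Rel.kideal_axioms] Rel.coset_alg_hom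
        hat_closed hat_closed qhat_closed])
  finally show "ibar (br x y) = br4 U qbar k (ibar x) (ibar y)" .
qed

end

locale envelope_target = envelope_setting scale br X k + invariant_algebra A q
  for scale :: "'k::field \<Rightarrow> 'L::ab_group_add \<Rightarrow> 'L" and br X k and A :: "('b, 'k) kalg" and q +
  fixes f :: "'L \<Rightarrow> 'b"
  assumes leib_hom: "leib_hom scale br k A q f"
begin

lemma f_in_inv_set: "f x \<in> inv_set A q"
  and f_add: "f (x + y) = aadd A (f x) (f y)"
  and f_smul: "f (scale c x) = asmul A c (f x)"
  and f_br: "f (br x y) = br4 A q k (f x) (f y)"
  using leib_hom unfolding leib_hom_def by blast+

lemma f_closed [simp]: "f x \<in> acar A"
  using f_in_inv_set by (rule inv_set_closed)

lemma f_zero: "f 0 = azero A"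
proof -
  have "f 0 = f (scale 0 0)"
    using module.scale_zero_left[OF module] by simp
  then show ?thesis
    by (simp add: f_smul)
qed

lemma f_sum: "finite S \<Longrightarrow> f (sum h S) = finsum (ring_of A) (\<lambda>s. f (h s)) S"
proof (induction S rule: finite_induct)
  case empty
  show ?case by (simp add: f_zero)
next
  case (insert x S)
  have "(\<lambda>s. f (h s)) \<in> S \<rightarrow> acar A"
    by simp
  then show ?case
    using insert R.finsum_insert by (simp add: f_add)
qed

definition letter_value :: "'L option \<Rightarrow> 'b" where
  "letter_value a = (case a of None \<Rightarrow> q | Some x \<Rightarrow> f x)"

sublocale letter_assignment A letter_value
  by unfold_locales (simp add: letter_value_def split: option.split)

abbreviation eval where "eval \<equiv> tens_eval A letter_value"

lemma eval_qtil: "eval qtil = q"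
  unfolding qtil_def tens_eval_letter letter_value_def by simp

lemma eval_vec_of: "eval (vec_of scale X x) = f x"
proof -
  define B where "B = {b. module.representation scale X x b \<noteq> 0}"
  have B: "finite B"
    unfolding B_def using module.finite_representation[OF module] by blast
  have supp: "supp (vec_of scale X x) \<subseteq> (\<lambda>b. [Some b]) ` B"
    unfolding supp_def B_def using vec_of_nonzero by fastforce
  have "eval (vec_of scale X x) =
      finsum (ring_of A) (\<lambda>w. asmul A (vec_of scale X x w) (word_eval A letter_value w))
        ((\<lambda>b. [Some b]) ` B)"
    by (rule tens_eval_eq_finsum[OF finite_imageI[OF B] supp])
  also have "\<dots> = finsum (ring_of A) (\<lambda>b. asmul A (module.representation scale X x b) (f b)) B"
    by (subst R.finsum_reindex) (auto simp: inj_on_def word_eval_Cons letter_value_def vec_of_def)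
  also have "\<dots> = f (\<Sum>b\<in>B. scale (module.representation scale X x b) b)"
    by (simp add: f_sum[OF B] f_smul)
  also have "(\<Sum>b\<in>B. scale (module.representation scale X x b) b) = x"
    unfolding B_def using module.sum_nonzero_representation_eq[OF module independent] spanning
    by simp
  finally show ?thesis .
qed

lemma eval_in_inv_set: "p \<in> acar T \<Longrightarrow> eval p \<in> inv_set A q"
proof (rule tens_alg_hom_image[OF tens_eval_alg_hom])
  fix a
  show "eval (letter a) \<in> inv_set A q"
    unfolding tens_eval_letter letter_value_def using q_in_inv_set f_in_inv_set
    by (simp split: option.split)
qed (simp_all add: one_in_inv_set add_in_inv_set smul_in_inv_set mul_in_inv_set)

lemma eval_invariance_relator:
  assumes "s \<in> invariance_relators"
  shows "eval s = azero A"
proof -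
  note hom = alg_hom_sub[OF kalg_tens_alg kalg_axioms tens_eval_alg_hom]
    alg_hom_mul[OF tens_eval_alg_hom]
  have "eval (asub T (amul T qtil qtil) qtil) = azero A"
    using qtil_closed by (simp add: hom eval_qtil q_idem)
  moreover have "eval (asub T (amul T qtil (amul T a qtil)) (amul T qtil a)) = azero A"
    if "a \<in> acar T" for a
    using that qtil_closed eval_in_inv_set[OF that]
    by (simp add: hom eval_qtil inv_set_eq inv_set_closed)
  ultimately show ?thesis
    using assms unfolding invariance_relators_def by blast
qed

definition eval_Ahat :: "('L option list \<Rightarrow> 'k) set \<Rightarrow> 'b" where
  "eval_Ahat C = eval (rep C)"

lemma eval_Ahat_alg_hom: "alg_hom Ahat A eval_Ahat"
  and eval_Ahat_proj: "p \<in> acar T \<Longrightarrow> eval_Ahat (proj_I p) = eval p"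
  unfolding eval_Ahat_def Ahat_eq I_eq
  using quot_gen_ideal_lift[OF kalg_tens_alg kalg_axioms tens_eval_alg_hom
      invariance_relators_closed eval_invariance_relator] by blast+

lemma eval_Ahat_hat: "eval_Ahat (hat scale X x) = f x"
  unfolding hat_eq_coset_vec_of using eval_Ahat_proj[OF vec_of_closed] eval_vec_of by simp

lemma eval_Ahat_qhat: "eval_Ahat qhat = q"
  unfolding qhat_eq using eval_Ahat_proj[OF qtil_closed] eval_qtil by simp

lemma eval_Ahat_leibniz_relator: "s \<in> leibniz_relators \<Longrightarrow> eval_Ahat s = azero A"
proof (unfold leibniz_relators_def, elim CollectE exE conjE)
  fix x y
  assume s: "s = asub Ahat (hat scale X (br x y)) (br4 Ahat qhat k (hat scale X x) (hat scale X y))"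
  have "eval_Ahat s = asub A (f (br x y)) (br4 A q k (f x) (f y))"
    unfolding s
    using alg_hom_sub[OF Ahat.kalg_axioms kalg_axioms eval_Ahat_alg_hom hat_closed
        br4_closed[OF hat_closed hat_closed]]
      alg_hom_br4[OF Ahat.kalg_axioms kalg_axioms eval_Ahat_alg_hom hat_closed hat_closed qhat_closed]
      eval_Ahat_hat eval_Ahat_qhat
    by simp
  then show "eval_Ahat s = azero A"
    using f_br q_closed unfolding br4_def by simp
qed

definition lift :: "('L option list \<Rightarrow> 'k) set set \<Rightarrow> 'b" where
  "lift C = eval_Ahat (rep C)"

lemma lift_alg_hom: "alg_hom U A lift"
  and lift_proj: "a \<in> acar Ahat \<Longrightarrow> lift (proj_R a) = eval_Ahat a"
  unfolding lift_def U_eq Rel_eq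
  using quot_gen_ideal_lift[OF Ahat.kalg_axioms kalg_axioms eval_Ahat_alg_hom
      leibniz_relators_closed eval_Ahat_leibniz_relator] by blast+

lemma lift_ibar: "f x = lift (ibar x)"
  unfolding ibar_eq using lift_proj[OF hat_closed] eval_Ahat_hat by simp

lemma lift_qbar: "lift qbar = q"
  unfolding qbar_eq using lift_proj[OF qhat_closed] eval_Ahat_qhat by simp

lemma lift_inv_hom: "inv_hom U qbar A q lift"
  unfolding inv_hom_iff_alg_hom[OF inv_set_U]
proof (intro conjI ballI lift_alg_hom lift_qbar)
  fix u assume "u \<in> acar U"
  then obtain p where p: "p \<in> acar T" "u = proj_R (proj_I p)"
    using U_cases by blast
  have "proj_I p \<in> acar Ahat"
    unfolding Ahat_eq using p(1) by simp
  then show "lift u \<in> inv_set A q"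
    unfolding p(2) using lift_proj eval_Ahat_proj[OF p(1)] eval_in_inv_set[OF p(1)] by simp
qed

lemma lift_unique:
  assumes g: "inv_hom U qbar A q g" and gf: "\<And>x. f x = g (ibar x)" and u: "u \<in> acar U"
  shows "g u = lift u"
proof -
  let ?\<pi> = "proj_R \<circ> proj_I"
  have \<pi>: "alg_hom T U ?\<pi>"
    unfolding U_eq
    by (rule alg_hom_comp[OF I.coset_alg_hom, folded Ahat_eq, OF Rel.coset_alg_hom])
  have g_hom: "alg_hom U A g" and g_qbar: "g qbar = q"
    using g unfolding inv_hom_iff_alg_hom[OF inv_set_U] by blast+
  have "(g \<circ> ?\<pi>) (letter a) = (lift \<circ> ?\<pi>) (letter a)" if "a \<in> letters X" for a
  proof (cases a)
    case None
    then have "?\<pi> (letter a) = qbar"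
      unfolding qbar_eq qhat_eq qtil_def by simp
    then show ?thesis
      using g_qbar lift_qbar by simp
  next
    case (Some x)
    then have "?\<pi> (letter a) = ibar x"
      using that vec_of_basis unfolding letters_def ibar_eq hat_eq_coset_vec_of by auto
    then show ?thesis
      using gf lift_ibar by simp
  qed
  moreover obtain p where p: "p \<in> acar T" "u = ?\<pi> p"
    using U_cases[OF u] by auto
  ultimately show ?thesis
    using tens_alg_hom_ext[OF alg_hom_comp[OF \<pi> g_hom] alg_hom_comp[OF \<pi> lift_alg_hom]]
    by simp
qed

end

lemma (in envelope_setting) U_enveloping4: "enveloping4 scale br k U qbar ibar TYPE('b)"
  unfolding enveloping4_def
proof (intro conjI allI impI U_invariant ibar_leib_hom; elim conjE)
  fix A :: "('b, 'k) kalg" and q f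
  assume "invariant_alg A q" "leib_hom scale br k A q f"
  then interpret envelope_target scale br X k A q f
    by (intro envelope_target.intro invariant_algebra.intro envelope_target_axioms.intro)
      (unfold_locales)
  show "\<exists>f'. inv_hom U qbar A q f' \<and> (\<forall>x. f x = f' (ibar x)) \<and>
      (\<forall>g. inv_hom U qbar A q g \<and> (\<forall>x. f x = g (ibar x)) \<longrightarrow> (\<forall>u\<in>inv_set U qbar. g u = f' u))"
    using lift_inv_hom lift_ibar lift_unique unfolding inv_set_U by blast
qed

theorem proposition5p1:
  fixes scale :: "'k::field \<Rightarrow> 'L::ab_group_add \<Rightarrow> 'L"
    and br :: "'L \<Rightarrow> 'L \<Rightarrow> 'L"
    and X :: "'L set"
    and k :: 'k
  assumes "leibniz_alg scale br"
    and "module.independent scale X"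
    and "module.span scale X = UNIV"
    and "k \<noteq> 0"
  shows "enveloping4 scale br k (U_env scale br k X) (q_bar scale br k X) (i_env scale br k X)
           TYPE('b)"
proof -
  interpret envelope_setting scale br X k
    using assms(1-3) unfolding leibniz_alg_def by (intro envelope_setting.intro) auto
  show ?thesis
    by (rule U_enveloping4)
qed

end
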